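(* Let $1\le b<\frac{n}{2}-1$ and let $T$ be a tree attaining the maximum value of $M_2$ over $\mathcal{CT}^*_{n,b}$. Then $T$ contains no internal path of length greater than $1$.
   Context: A chemical tree is a tree with maximum degree at most $4$. A branching vertex is a vertex of degree greater than $2$. An internal path is a path $u_0\cdots u_r$ ($r\ge1$) whose end vertices are branching and whose internal vertices all have degree $2$; its length is $r$. $\mathcal{CT}^*_{n,b}$ is the class of all $n$-vertex chemical trees with exactly $b$ branching vertices. $M_2(G)=\sum_{uv\in E(G)}d_ud_v$, where $d_v$ is the degree of $v$. *)

theory Defs
  imports Complex_Main
begin

definition simple_graph :: "'a set \<Rightarrow> 'a set set \<Rightarrow> bool" where
  "simple_graph V E \<longleftrightarrow> finite V \<and> (\<forall>e\<in>E. \<exists>u v. u \<in> V \<and> v \<in> V \<and> u \<noteq> v \<and> e = {u, v})"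

definition deg :: "'a set set \<Rightarrow> 'a \<Rightarrow> nat" where
  "deg E v = card {e \<in> E. v \<in> e}"

definition adj_rel :: "'a set set \<Rightarrow> ('a \<times> 'a) set" where
  "adj_rel E = {(u, v). {u, v} \<in> E}"

definition connected_graph :: "'a set \<Rightarrow> 'a set set \<Rightarrow> bool" where
  "connected_graph V E \<longleftrightarrow> (\<forall>u\<in>V. \<forall>v\<in>V. (u, v) \<in> (adj_rel E)\<^sup>*)"

definition is_path :: "'a set set \<Rightarrow> 'a list \<Rightarrow> bool" where
  "is_path E ps \<longleftrightarrow> ps \<noteq> [] \<and> distinct ps \<and> (\<forall>i. i + 1 < length ps \<longrightarrow> {ps ! i, ps ! (i + 1)} \<in> E)"

definition is_cycle :: "'a set set \<Rightarrow> 'a list \<Rightarrow> bool" where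
  "is_cycle E ps \<longleftrightarrow> length ps \<ge> 3 \<and> is_path E ps \<and> {last ps, hd ps} \<in> E"

definition tree :: "'a set \<Rightarrow> 'a set set \<Rightarrow> bool" where
  "tree V E \<longleftrightarrow> simple_graph V E \<and> V \<noteq> {} \<and> connected_graph V E \<and> \<not> (\<exists>ps. is_cycle E ps)"

definition chemical_tree :: "'a set \<Rightarrow> 'a set set \<Rightarrow> bool" where
  "chemical_tree V E \<longleftrightarrow> tree V E \<and> (\<forall>v\<in>V. deg E v \<le> 4)"

definition branching_vertices :: "'a set \<Rightarrow> 'a set set \<Rightarrow> 'a set" where
  "branching_vertices V E = {v \<in> V. deg E v > 2}"

definition CT_star :: "nat \<Rightarrow> nat \<Rightarrow> 'a set \<Rightarrow> 'a set set \<Rightarrow> bool" where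
  "CT_star n b V E \<longleftrightarrow> chemical_tree V E \<and> card V = n \<and> card (branching_vertices V E) = b"

definition M2 :: "'a set set \<Rightarrow> nat" where
  "M2 E = (\<Sum>e\<in>E. \<Prod>v\<in>e. deg E v)"

text \<open>Internal path u_0 ... u_r (r >= 1): ends branching, interior vertices of degree 2.
  Its length is r = length ps - 1.\<close>
definition internal_path :: "'a set set \<Rightarrow> 'a list \<Rightarrow> bool" where
  "internal_path E ps \<longleftrightarrow> length ps \<ge> 2 \<and> is_path E ps \<and>
     deg E (hd ps) > 2 \<and> deg E (last ps) > 2 \<and>
     (\<forall>i. 0 < i \<and> i < length ps - 1 \<longrightarrow> deg E (ps ! i) = 2)"

end

(*
  Let u0 ... ur (r >= 2) be an internal path of an M2-maximal tree T in CT*(n,b), and let l be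
  a leaf whose neighbour y has degree at least 2 (the end of a longest path). Delete the edges
  u0 u1 and u(r-1) ur and add u0 ur and l u1: the interior of the path is cut out and re-hung
  below l. This exchange keeps a chemical tree with the same branching vertices, since only
  l (1 to 2) and u(r-1) (2 to 1) change degree, and it raises M2 by
  (d(u0) - 2) (d(ur) - 2) + d(y) - 2 >= 1, contradicting maximality.
*)

theory Submission
  imports Defs
begin

section \<open>Paths and reachability\<close>

lemma adj_rel_iff [simp]: "(u, v) \<in> adj_rel E \<longleftrightarrow> {u, v} \<in> E"
  by (simp add: adj_rel_def)

lemma adj_rel_rtrancl_sym: "(u, v) \<in> (adj_rel E)\<^sup>* \<Longrightarrow> (v, u) \<in> (adj_rel E)\<^sup>*"
proof -
  have "sym (adj_rel E)"
    by (auto simp: sym_def insert_commute)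
  then show "(u, v) \<in> (adj_rel E)\<^sup>* \<Longrightarrow> (v, u) \<in> (adj_rel E)\<^sup>*"
    by (meson sym_rtrancl symD)
qed

lemma adj_rel_rtrancl_mono:
  "E \<subseteq> F \<Longrightarrow> (u, v) \<in> (adj_rel E)\<^sup>* \<Longrightarrow> (u, v) \<in> (adj_rel F)\<^sup>*"
proof -
  assume "E \<subseteq> F" and "(u, v) \<in> (adj_rel E)\<^sup>*"
  moreover have "adj_rel E \<subseteq> adj_rel F"
    using \<open>E \<subseteq> F\<close> by (auto simp: adj_rel_def)
  ultimately show ?thesis
    using rtrancl_mono by blast
qed

lemma adj_rel_rtrancl_nth:
  assumes "\<And>m. i \<le> m \<Longrightarrow> m < j \<Longrightarrow> {ps ! m, ps ! Suc m} \<in> E" and "i \<le> j"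
  shows "(ps ! i, ps ! j) \<in> (adj_rel E)\<^sup>*"
  using assms(2)
proof (induction rule: dec_induct)
  case base
  then show ?case by simp
next
  case (step m)
  then show ?case
    using assms(1) by (simp add: rtrancl_into_rtrancl)
qed

lemma adj_rel_rtrancl_closed:
  assumes "(x, y) \<in> (adj_rel E)\<^sup>*" and "x \<in> S" and "\<And>u v. {u, v} \<in> E \<Longrightarrow> u \<in> S \<Longrightarrow> v \<in> S"
  shows "y \<in> S"
  using assms(1,2) by induction (auto intro: assms(3))

lemma is_path_mono: "is_path E ps \<Longrightarrow> E \<subseteq> F \<Longrightarrow> is_path F ps"
  by (auto simp: is_path_def)

lemma no_cycle_mono: "\<not> (\<exists>ps. is_cycle F ps) \<Longrightarrow> E \<subseteq> F \<Longrightarrow> \<not> (\<exists>ps. is_cycle E ps)"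
  by (auto simp: is_cycle_def intro: is_path_mono)

lemma simple_graph_finite_edges: "simple_graph V E \<Longrightarrow> finite E"
  by (rule finite_subset[of _ "Pow V"]) (auto simp: simple_graph_def)

lemma simple_graph_edge_vertex: "simple_graph V E \<Longrightarrow> e \<in> E \<Longrightarrow> v \<in> e \<Longrightarrow> v \<in> V"
  by (auto simp: simple_graph_def)

lemma path_vertices_subset:
  assumes "simple_graph V E" and "is_path E ps" and "2 \<le> length ps"
  shows "set ps \<subseteq> V"
proof
  fix v assume "v \<in> set ps"
  then obtain i where i: "i < length ps" "ps ! i = v"
    by (auto simp: in_set_conv_nth)
  have edge: "{ps ! j, ps ! Suc j} \<in> E" if "Suc j < length ps" for j
    using assms(2) that by (simp add: is_path_def)
  show "v \<in> V"
  proof (cases "Suc i < length ps")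
    case True
    then show ?thesis
      using edge i(2) simple_graph_edge_vertex[OF assms(1)] by blast
  next
    case False
    then have "Suc (i - 1) < length ps" and "Suc (i - 1) = i"
      using i(1) assms(3) by auto
    then show ?thesis
      using edge i(2) simple_graph_edge_vertex[OF assms(1)] by (metis insertI1 insert_commute)
  qed
qed

lemma path_edges_distinct:
  assumes "distinct ps" and "Suc i < length ps" and "Suc j < length ps" and "i \<noteq> j"
  shows "{ps ! i, ps ! Suc i} \<noteq> {ps ! j, ps ! Suc j}"
  using assms by (auto simp: doubleton_eq_iff nth_eq_iff_index_eq)

lemma adj_rel_rtrancl_imp_path:
  assumes "(x, y) \<in> (adj_rel E)\<^sup>*"
  shows "\<exists>ps. is_path E ps \<and> hd ps = x \<and> last ps = y"
  using assms
proof (induction rule: converse_rtrancl_induct)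
  case base
  show ?case
    by (rule exI[of _ "[y]"]) (simp add: is_path_def)
next
  case (step x z)
  then obtain p where p: "is_path E p" "hd p = z" "last p = y"
    by blast
  have ne: "p \<noteq> []" and d: "distinct p" and ed: "\<forall>i. i + 1 < length p \<longrightarrow> {p ! i, p ! (i + 1)} \<in> E"
    using p by (auto simp: is_path_def)
  show ?case
  proof (cases "x \<in> set p")
    case True
    then obtain i where i: "i < length p" "p ! i = x"
      by (metis in_set_conv_nth)
    have "is_path E (drop i p)"
      unfolding is_path_def using i d ed by (auto simp: add.commute add.left_commute)
    then show ?thesis
      using i p by (auto simp: hd_drop_conv_nth)
  next
    case False
    have "is_path E (x # p)"
      unfolding is_path_def
    proof (intro conjI allI impI)
      show "distinct (x # p)"
        using False d by simp
      fix i assume "i + 1 < length (x # p)"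
      then show "{(x # p) ! i, (x # p) ! (i + 1)} \<in> E"
        using ed step.hyps(1) p(2) ne by (cases i) (auto simp: hd_conv_nth)
    qed simp
    then show ?thesis
      using p ne by auto
  qed
qed

section \<open>Cycles, bridges and edge exchange\<close>

lemma path_edge_ne_closing:
  assumes "distinct ps" and "Suc i < length ps" and "3 \<le> length ps"
  shows "{ps ! i, ps ! Suc i} \<noteq> {ps ! (length ps - 1), ps ! 0}"
proof -
  have "i < length ps" and "0 < length ps" and "length ps - 1 < length ps"
    using assms(2) by auto
  then show ?thesis
    using assms by (auto simp: doubleton_eq_iff nth_eq_iff_index_eq)
qed

lemma cycle_edge_reachable_without:
  assumes "is_cycle E ps" and "Suc j < length ps"
  shows "(ps ! j, ps ! Suc j) \<in> (adj_rel (E - {{ps ! j, ps ! Suc j}}))\<^sup>*"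
proof -
  let ?H = "E - {{ps ! j, ps ! Suc j}}" and ?k = "length ps"
  have k: "3 \<le> ?k" and d: "distinct ps" and ed: "\<And>i. Suc i < ?k \<Longrightarrow> {ps ! i, ps ! Suc i} \<in> E"
    and closing: "{ps ! (?k - 1), ps ! 0} \<in> E"
    using assms(1) by (auto simp: is_cycle_def is_path_def hd_conv_nth last_conv_nth)
  have seg: "{ps ! m, ps ! Suc m} \<in> ?H" if "Suc m < ?k" "m \<noteq> j" for m
    using that ed path_edges_distinct[OF d _ assms(2)] by blast
  have "(ps ! Suc j, ps ! (?k - 1)) \<in> (adj_rel ?H)\<^sup>*"
    by (rule adj_rel_rtrancl_nth) (use seg assms(2) in auto)
  moreover have "{ps ! (?k - 1), ps ! 0} \<in> ?H"
    using closing path_edge_ne_closing[OF d assms(2) k] by auto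
  moreover have "(ps ! 0, ps ! j) \<in> (adj_rel ?H)\<^sup>*"
    by (rule adj_rel_rtrancl_nth) (use seg assms(2) in auto)
  ultimately show ?thesis
    by (meson adj_rel_iff adj_rel_rtrancl_sym r_into_rtrancl rtrancl_trans)
qed

lemma cycle_closing_edge_reachable_without:
  assumes "is_cycle E ps"
  shows "(last ps, hd ps) \<in> (adj_rel (E - {{last ps, hd ps}}))\<^sup>*"
proof -
  let ?k = "length ps"
  let ?H = "E - {{ps ! (?k - 1), ps ! 0}}"
  have k: "3 \<le> ?k" and d: "distinct ps" and ed: "\<And>i. Suc i < ?k \<Longrightarrow> {ps ! i, ps ! Suc i} \<in> E"
    using assms by (auto simp: is_cycle_def is_path_def)
  have "(ps ! 0, ps ! (?k - 1)) \<in> (adj_rel ?H)\<^sup>*"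
    by (rule adj_rel_rtrancl_nth) (use ed path_edge_ne_closing[OF d _ k] in auto)
  moreover have "ps \<noteq> []"
    using k by auto
  ultimately show ?thesis
    by (simp add: hd_conv_nth last_conv_nth adj_rel_rtrancl_sym)
qed

lemma no_cycle_insert_edge:
  assumes "\<not> (\<exists>ps. is_cycle E ps)" and "(x, y) \<notin> (adj_rel E)\<^sup>*"
  shows "\<not> (\<exists>ps. is_cycle (insert {x, y} E) ps)"
proof
  assume "\<exists>ps. is_cycle (insert {x, y} E) ps"
  then obtain ps where cyc: "is_cycle (insert {x, y} E) ps"
    by blast
  have separated: "(a, b) \<notin> (adj_rel (insert {x, y} E - {{x, y}}))\<^sup>*"
    if ab: "{a, b} = {x, y}" for a b
  proof
    assume "(a, b) \<in> (adj_rel (insert {x, y} E - {{x, y}}))\<^sup>*"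
    then have "(a, b) \<in> (adj_rel E)\<^sup>*"
      by (rule adj_rel_rtrancl_mono[rotated]) blast
    moreover have "a = x \<and> b = y \<or> a = y \<and> b = x"
      using ab by (auto simp: doubleton_eq_iff)
    ultimately have "(x, y) \<in> (adj_rel E)\<^sup>*"
      by (metis adj_rel_rtrancl_sym)
    then show False
      using assms(2) by blast
  qed
  have "{ps ! j, ps ! Suc j} \<noteq> {x, y}" if "Suc j < length ps" for j
  proof
    assume edge: "{ps ! j, ps ! Suc j} = {x, y}"
    show False
      using separated[OF edge] cycle_edge_reachable_without[OF cyc that] edge by simp
  qed
  moreover have "{last ps, hd ps} \<noteq> {x, y}"
  proof
    assume edge: "{last ps, hd ps} = {x, y}"
    show False
      using separated[OF edge] cycle_closing_edge_reachable_without[OF cyc] edge by simp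
  qed
  ultimately have "is_cycle E ps"
    using cyc by (auto simp: is_cycle_def is_path_def)
  then show False
    using assms(1) by blast
qed

lemma no_cycle_edge_is_bridge:
  assumes "\<not> (\<exists>ps. is_cycle E ps)" and "{x, y} \<in> E" and "x \<noteq> y"
  shows "(x, y) \<notin> (adj_rel (E - {{x, y}}))\<^sup>*"
proof
  assume "(x, y) \<in> (adj_rel (E - {{x, y}}))\<^sup>*"
  then obtain p where p: "is_path (E - {{x, y}}) p" "hd p = x" "last p = y"
    using adj_rel_rtrancl_imp_path by metis
  have ne: "p \<noteq> []"
    using p by (auto simp: is_path_def)
  have "length p \<noteq> 1"
  proof
    assume "length p = 1"
    then have "hd p = last p"
      by (cases p) auto
    then show False
      using p assms(3) by simp
  qed
  moreover have "length p \<noteq> 2"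
  proof
    assume two: "length p = 2"
    have "\<forall>i. i + 1 < length p \<longrightarrow> {p ! i, p ! (i + 1)} \<in> E - {{x, y}}"
      using p(1) by (simp add: is_path_def)
    then have "{p ! 0, p ! 1} \<in> E - {{x, y}}"
      using two by (auto dest: spec[of _ 0])
    moreover have "p ! 0 = x" and "p ! 1 = y"
      using p(2,3) ne two by (simp_all add: hd_conv_nth last_conv_nth)
    ultimately show False
      by simp
  qed
  moreover have "length p \<noteq> 0"
    using ne by simp
  ultimately have "3 \<le> length p"
    by arith
  moreover have "is_path E p"
    using is_path_mono[OF p(1) Diff_subset] .
  moreover have "{last p, hd p} \<in> E"
    using p(2,3) assms(2) by (simp add: insert_commute)
  ultimately have "is_cycle E p"
    by (simp add: is_cycle_def)
  then show False
    using assms(1) by blast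
qed

lemma connected_remove_edge:
  assumes "connected_graph V E" and "{x, y} \<in> E" and "x \<in> V" and "v \<in> V"
  shows "(x, v) \<in> (adj_rel (E - {{x, y}}))\<^sup>* \<or> (y, v) \<in> (adj_rel (E - {{x, y}}))\<^sup>*"
proof -
  let ?R = "(adj_rel (E - {{x, y}}))\<^sup>*"
  let ?S = "{v. (x, v) \<in> ?R \<or> (y, v) \<in> ?R}"
  have "(x, v) \<in> (adj_rel E)\<^sup>*"
    using assms(1,3,4) by (simp add: connected_graph_def)
  then have "v \<in> ?S"
  proof (rule adj_rel_rtrancl_closed)
    fix u w assume uw: "{u, w} \<in> E" and u: "u \<in> ?S"
    show "w \<in> ?S"
    proof (cases "{u, w} = {x, y}")
      case True
      then have "w = x \<or> w = y"
        by (auto simp: doubleton_eq_iff)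
      then show ?thesis
        by auto
    next
      case False
      then have "(u, w) \<in> adj_rel (E - {{x, y}})"
        using uw by simp
      moreover have "(x, u) \<in> ?R \<or> (y, u) \<in> ?R"
        using u by simp
      ultimately have "(x, w) \<in> ?R \<or> (y, w) \<in> ?R"
        using rtrancl_into_rtrancl by metis
      then show ?thesis
        by simp
    qed
  qed simp
  then show ?thesis
    by simp
qed

lemma tree_exchange:
  assumes "tree V E" and "{x, y} \<in> E" and "p \<in> V" and "q \<in> V"
    and separated: "(p, q) \<notin> (adj_rel (E - {{x, y}}))\<^sup>*"
  shows "tree V (insert {p, q} (E - {{x, y}}))"
proof -
  let ?E' = "insert {p, q} (E - {{x, y}})"
  let ?R = "(adj_rel (E - {{x, y}}))\<^sup>*" and ?R' = "(adj_rel ?E')\<^sup>*"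
  have sg: "simple_graph V E" and conn: "connected_graph V E" and acyc: "\<not> (\<exists>ps. is_cycle E ps)"
    and "V \<noteq> {}"
    using assms(1) by (auto simp: tree_def)
  have "x \<in> V" and "y \<in> V"
    using sg assms(2) by (auto simp: simple_graph_def doubleton_eq_iff)
  have "p \<noteq> q"
    using separated by auto
  then have "simple_graph V ?E'"
    using sg assms(3,4) by (auto simp: simple_graph_def)
  have R_R': "(u, v) \<in> ?R'" if "(u, v) \<in> ?R" for u v
    using that by (rule adj_rel_rtrancl_mono[rotated]) blast
  have pq: "(p, q) \<in> ?R'" and qp: "(q, p) \<in> ?R'"
    by (simp_all add: r_into_rtrancl insert_commute)
  have near: "(x, v) \<in> ?R \<or> (y, v) \<in> ?R" if "v \<in> V" for v
    using connected_remove_edge[OF conn assms(2) \<open>x \<in> V\<close> that] .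
  have apart: False if "(a, p) \<in> ?R" and "(a, q) \<in> ?R" for a
    using that separated adj_rel_rtrancl_sym rtrancl_trans by metis
  have "(x, y) \<in> ?R'"
  proof (cases "(x, p) \<in> ?R")
    case True
    then have "(y, q) \<in> ?R"
      using near[OF assms(4)] apart by blast
    then show ?thesis
      using True pq R_R' adj_rel_rtrancl_sym rtrancl_trans by metis
  next
    case False
    then have "(y, p) \<in> ?R" and "(x, q) \<in> ?R"
      using near[OF assms(3)] near[OF assms(4)] apart by blast+
    then show ?thesis
      using qp R_R' adj_rel_rtrancl_sym rtrancl_trans by metis
  qed
  then have from_x: "(x, v) \<in> ?R'" if "v \<in> V" for v
    using near[OF that] R_R' rtrancl_trans by metis
  have "connected_graph V ?E'"
    unfolding connected_graph_def using from_x adj_rel_rtrancl_sym rtrancl_trans by metis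
  moreover have "\<not> (\<exists>ps. is_cycle ?E' ps)"
    by (rule no_cycle_insert_edge[OF no_cycle_mono[OF acyc Diff_subset] separated])
  ultimately show ?thesis
    using \<open>simple_graph V ?E'\<close> \<open>V \<noteq> {}\<close> by (simp add: tree_def)
qed

lemma is_path_snoc:
  assumes "is_path E p" and "q \<notin> set p" and "{last p, q} \<in> E"
  shows "is_path E (p @ [q])"
  unfolding is_path_def
proof (intro conjI allI impI)
  have ne: "p \<noteq> []" and d: "distinct p" and ed: "\<forall>i. i + 1 < length p \<longrightarrow> {p ! i, p ! (i + 1)} \<in> E"
    using assms(1) by (auto simp: is_path_def)
  show "distinct (p @ [q])"
    using d assms(2) by simp
  fix i assume i: "i + 1 < length (p @ [q])"
  show "{(p @ [q]) ! i, (p @ [q]) ! (i + 1)} \<in> E"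
  proof (cases "i + 1 < length p")
    case True
    then show ?thesis
      using ed by (simp add: nth_append)
  next
    case False
    then have "i = length p - 1"
      using i by simp
    then show ?thesis
      using assms(3) ne by (simp add: nth_append last_conv_nth)
  qed
qed simp

lemma longest_path_end_is_leaf:
  assumes sg: "simple_graph V E" and acyc: "\<not> (\<exists>ps. is_cycle E ps)"
    and p: "is_path E p" "set p \<subseteq> V" "2 \<le> length p"
    and longest: "\<And>p'. is_path E p' \<Longrightarrow> set p' \<subseteq> V \<Longrightarrow> length p' \<le> length p"
  shows "{e \<in> E. last p \<in> e} = {{p ! (length p - 2), last p}}"
proof -
  let ?m = "length p"
  define l where "l = last p"
  define y where "y = p ! (?m - 2)"
  have ne: "p \<noteq> []" and d: "distinct p" and ed: "\<And>i. Suc i < ?m \<Longrightarrow> {p ! i, p ! Suc i} \<in> E"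
    using p by (auto simp: is_path_def)
  have l_nth: "l = p ! (?m - 1)"
    using ne by (simp add: l_def last_conv_nth)
  have yl: "{y, l} \<in> E"
    using ed[of "?m - 2"] p(3) by (simp add: y_def l_nth numeral_2_eq_2 Suc_diff_Suc)
  have "e = {y, l}" if e: "e \<in> E" "l \<in> e" for e
  proof (rule ccontr)
    assume ne_yl: "e \<noteq> {y, l}"
    obtain a b where "a \<in> V" "b \<in> V" "a \<noteq> b" "e = {a, b}"
      using sg e(1) by (auto simp: simple_graph_def)
    then obtain w where w: "e = {l, w}" "w \<noteq> l" "w \<in> V"
      using e(2) by auto
    show False
    proof (cases "w \<in> set p")
      case False
      then have "is_path E (p @ [w])"
        using is_path_snoc[OF p(1)] w e by (simp add: l_def)
      then show False
        using longest[of "p @ [w]"] p(2) w(3) by simp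
    next
      case True
      then obtain j where j: "j < ?m" "p ! j = w"
        by (metis in_set_conv_nth)
      have "j \<noteq> ?m - 1" and "j \<noteq> ?m - 2"
        using j w ne_yl by (auto simp: l_nth y_def insert_commute)
      then have "3 \<le> length (drop j p)"
        using j by simp
      moreover have "is_path E (drop j p)"
        unfolding is_path_def using j d ed by (auto simp: add.commute add.left_commute)
      moreover have "{last (drop j p), hd (drop j p)} \<in> E"
        using j w e by (simp add: hd_drop_conv_nth l_def)
      ultimately have "is_cycle E (drop j p)"
        by (simp add: is_cycle_def)
      then show False
        using acyc by blast
    qed
  qed
  then show ?thesis
    unfolding l_def[symmetric] y_def[symmetric] using yl by blast
qed

lemma long_path_imp_pendant_edge:
  assumes sg: "simple_graph V E" and acyc: "\<not> (\<exists>ps. is_cycle E ps)"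
    and q: "is_path E q" "3 \<le> length q"
  shows "\<exists>l y. {e \<in> E. l \<in> e} = {{y, l}} \<and> 2 \<le> deg E y"
proof -
  let ?P = "\<lambda>p. is_path E p \<and> set p \<subseteq> V"
  have "length p < card V + 1" if "?P p" for p
    using that sg distinct_card[of p] card_mono[of V "set p"]
    by (simp add: is_path_def simple_graph_def)
  moreover have "?P q"
    using q path_vertices_subset[OF sg] by simp
  ultimately obtain p where p: "?P p" and longest: "\<And>p'. ?P p' \<Longrightarrow> length p' \<le> length p"
    using ex_has_greatest_nat[of ?P q length "card V + 1"] by blast
  let ?m = "length p"
  have m: "3 \<le> ?m"
    using longest[OF \<open>?P q\<close>] q(2) by simp
  have d: "distinct p" and ed: "\<And>i. Suc i < ?m \<Longrightarrow> {p ! i, p ! Suc i} \<in> E"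
    using p by (auto simp: is_path_def)
  have leaf: "{e \<in> E. last p \<in> e} = {{p ! (?m - 2), last p}}"
    using longest_path_end_is_leaf[OF sg acyc] p m longest by simp
  have "{p ! (?m - 3), p ! (?m - 2)} \<in> E"
    using ed[of "?m - 3"] m by (simp add: numeral_3_eq_3 numeral_2_eq_2 Suc_diff_Suc)
  moreover have "{p ! (?m - 3), p ! (?m - 2)} \<noteq> {p ! (?m - 2), last p}"
  proof -
    have "last p = p ! (?m - 1)"
      using m by (intro last_conv_nth) auto
    moreover have "?m - 3 < ?m" and "?m - 2 < ?m" and "?m - 1 < ?m"
      using m by auto
    ultimately show ?thesis
      using d m by (auto simp: nth_eq_iff_index_eq doubleton_eq_iff)
  qed
  moreover have "{p ! (?m - 2), last p} \<in> E"
    using leaf by blast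
  ultimately have
    "card {{p ! (?m - 3), p ! (?m - 2)}, {p ! (?m - 2), last p}} \<le> deg E (p ! (?m - 2))"
    unfolding deg_def using simple_graph_finite_edges[OF sg] by (intro card_mono) auto
  then have "2 \<le> deg E (p ! (?m - 2))"
    using \<open>{p ! (?m - 3), p ! (?m - 2)} \<noteq> {p ! (?m - 2), last p}\<close> by simp
  then show ?thesis
    using leaf by blast
qed

section \<open>Degrees and the second Zagreb index\<close>

lemma deg_insert:
  assumes "finite E" and "e \<notin> E"
  shows "deg (insert e E) v = deg E v + (if v \<in> e then 1 else 0)"
proof -
  have "{x \<in> insert e E. v \<in> x} = (if v \<in> e then insert e {x \<in> E. v \<in> x} else {x \<in> E. v \<in> x})"
    by auto
  then show ?thesis
    using assms by (simp add: deg_def)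
qed

lemma deg_remove:
  assumes "finite E" and "a \<in> E"
  shows "deg (E - {a}) v = deg E v - (if v \<in> a then 1 else 0)"
proof -
  have "{x \<in> E - {a}. v \<in> x} = {x \<in> E. v \<in> x} - (if v \<in> a then {a} else {})"
    by auto
  then show ?thesis
    using assms by (simp add: deg_def)
qed

lemma deg_exchange:
  assumes "finite E" and "a \<in> E" and "c \<notin> E - {a}"
  shows "deg (insert c (E - {a})) v = deg E v - (if v \<in> a then 1 else 0) + (if v \<in> c then 1 else 0)"
proof -
  have "deg (insert c (E - {a})) v = deg (E - {a}) v + (if v \<in> c then 1 else 0)"
    using assms(1,3) by (simp add: deg_insert)
  then show ?thesis
    using assms(1,2) by (simp add: deg_remove)
qed

lemma deg_two_edges:
  assumes "finite E" and "deg E v = 2" and "a \<in> E" and "b \<in> E" and "a \<noteq> b" and "v \<in> a" and "v \<in> b"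
  shows "{e \<in> E. v \<in> e} = {a, b}"
proof -
  have "{a, b} \<subseteq> {e \<in> E. v \<in> e}"
    using assms by auto
  moreover have "card {a, b} = card {e \<in> E. v \<in> e}"
    using assms(2,5) by (simp add: deg_def)
  moreover have "finite {e \<in> E. v \<in> e}"
    using assms(1) by simp
  ultimately show ?thesis
    using card_subset_eq by metis
qed

lemma M2_replace_edges:
  assumes "finite E" and "K \<subseteq> E" and "finite K'" and "K' \<inter> (E - K) = {}"
    and "E' = K' \<union> (E - K)"
    and "\<And>e v. e \<in> E - K \<Longrightarrow> v \<in> e \<Longrightarrow> deg E' v = deg E v"
  shows "M2 E' + (\<Sum>e\<in>K. \<Prod>v\<in>e. deg E v) = M2 E + (\<Sum>e\<in>K'. \<Prod>v\<in>e. deg E' v)"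
proof -
  have common: "(\<Sum>e\<in>E - K. \<Prod>v\<in>e. deg E' v) = (\<Sum>e\<in>E - K. \<Prod>v\<in>e. deg E v)"
    using assms(6) by (intro sum.cong prod.cong) auto
  have "M2 E = (\<Sum>e\<in>E - K. \<Prod>v\<in>e. deg E v) + (\<Sum>e\<in>K. \<Prod>v\<in>e. deg E v)"
    unfolding M2_def using assms(1,2) by (simp add: sum.subset_diff)
  moreover have "M2 E' = (\<Sum>e\<in>K'. \<Prod>v\<in>e. deg E' v) + (\<Sum>e\<in>E - K. \<Prod>v\<in>e. deg E' v)"
    unfolding M2_def assms(5) using assms(1,3,4) by (simp add: sum.union_disjoint)
  ultimately show ?thesis
    using common by simp
qed

lemma double_sum_le_mult: "3 \<le> (a::nat) \<Longrightarrow> 3 \<le> b \<Longrightarrow> 2 * a + 2 * b \<le> a * b + 3"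
proof -
  assume "3 \<le> a" "3 \<le> b"
  then obtain a' b' where "a = a' + 3" "b = b' + 3"
    by (metis le_add_diff_inverse2)
  then show ?thesis
    by (simp add: algebra_simps)
qed

section \<open>Moving an internal path below a leaf\<close>

text \<open>The internal path is \<open>u0 u1 \<dots> ur1 ur\<close> with \<open>r = s + 2\<close>; indexing by \<open>s\<close> avoids
  subtraction in indices. For \<open>s = 0\<close> the vertices \<open>u1\<close> and \<open>ur1\<close> coincide.\<close>

locale path_transplant =
  fixes V :: "'a set" and E :: "'a set set" and ps :: "'a list" and s :: nat and l y :: 'a
  assumes tree: "tree V E"
    and internal: "internal_path E ps"
    and length: "length ps = s + 3"
    and pendant: "{e \<in> E. l \<in> e} = {{y, l}}"
begin

abbreviation "u0 \<equiv> ps ! 0"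
abbreviation "u1 \<equiv> ps ! 1"
abbreviation "ur1 \<equiv> ps ! Suc s"
abbreviation "ur \<equiv> ps ! Suc (Suc s)"

definition bypassed :: "'a set set" where
  "bypassed = insert {u0, ur} (E - {{u0, u1}})"

definition transplanted :: "'a set set" where
  "transplanted = insert {l, u1} (bypassed - {{ur1, ur}})"

lemma simple: "simple_graph V E"
  and finite_edges: "finite E"
  and acyclic: "\<not> (\<exists>ps. is_cycle E ps)"
  using tree simple_graph_finite_edges by (auto simp: tree_def)

lemma distinct_path: "distinct ps"
  and path_edge: "i \<le> Suc s \<Longrightarrow> {ps ! i, ps ! Suc i} \<in> E"
  using internal length by (auto simp: internal_path_def is_path_def)

lemma nth_eq_iff [simp]: "i \<le> Suc (Suc s) \<Longrightarrow> j \<le> Suc (Suc s) \<Longrightarrow> ps ! i = ps ! j \<longleftrightarrow> i = j"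
  using distinct_path length by (simp add: nth_eq_iff_index_eq)

lemma path_vertex: "i \<le> Suc (Suc s) \<Longrightarrow> ps ! i \<in> V"
proof -
  have "set ps \<subseteq> V"
    using path_vertices_subset[OF simple] internal length by (simp add: internal_path_def)
  moreover assume "i \<le> Suc (Suc s)"
  ultimately show "ps ! i \<in> V"
    using length nth_mem[of i ps] by auto
qed

lemma path_edge_eq_iff:
  "i \<le> Suc s \<Longrightarrow> j \<le> Suc s \<Longrightarrow> {ps ! i, ps ! Suc i} = {ps ! j, ps ! Suc j} \<longleftrightarrow> i = j"
  by (auto simp: doubleton_eq_iff)

lemma deg_ends: "3 \<le> deg E u0" "3 \<le> deg E ur"
proof -
  have "ps \<noteq> []"
    using length by auto
  then show "3 \<le> deg E u0" "3 \<le> deg E ur"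
    using internal length by (auto simp: internal_path_def hd_conv_nth last_conv_nth)
qed

lemma deg_interior: "j \<le> s \<Longrightarrow> deg E (ps ! Suc j) = 2"
  using internal length by (simp add: internal_path_def)

lemma interior_edges:
  assumes "j \<le> s"
  shows "{e \<in> E. ps ! Suc j \<in> e} = {{ps ! j, ps ! Suc j}, {ps ! Suc j, ps ! Suc (Suc j)}}"
  using assms path_edge[of j] path_edge[of "Suc j"]
  by (intro deg_two_edges[OF finite_edges deg_interior]) (auto simp: doubleton_eq_iff)

lemma deg_pendant: "deg E l = 1"
  using pendant by (simp add: deg_def)

lemma pendant_edge: "{y, l} \<in> E"
  using pendant by blast

lemma pendant_vertex: "l \<in> V"
  using simple_graph_edge_vertex[OF simple pendant_edge] by simp

lemma pendant_off_path:
  assumes "i \<le> Suc (Suc s)"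
  shows "ps ! i \<noteq> l"
proof -
  have "2 \<le> deg E (ps ! i)"
  proof (cases i)
    case (Suc j)
    then show ?thesis
      using assms deg_ends(2) deg_interior[of j] by (cases "j = Suc s") auto
  qed (use deg_ends(1) in simp)
  then show ?thesis
    using deg_pendant by auto
qed

lemma neighbour_off_interior:
  assumes "j \<le> s"
  shows "ps ! Suc j \<noteq> y"
proof
  assume "ps ! Suc j = y"
  then have "{y, l} \<in> {e \<in> E. ps ! Suc j \<in> e}"
    using pendant_edge by simp
  then have "l \<in> {ps ! j, ps ! Suc j, ps ! Suc (Suc j)}"
    unfolding interior_edges[OF assms] by auto
  then show False
    using assms pendant_off_path[of j] pendant_off_path[of "Suc j"]
      pendant_off_path[of "Suc (Suc j)"]
    by auto
qed

lemma u0_ur_separated: "(u0, ur) \<notin> (adj_rel (E - {{u0, u1}}))\<^sup>*"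
proof
  let ?R = "(adj_rel (E - {{u0, u1}}))\<^sup>*"
  assume "(u0, ur) \<in> ?R"
  moreover have "(u1, ur) \<in> ?R"
  proof (rule adj_rel_rtrancl_nth)
    fix m assume "1 \<le> m" and "m < Suc (Suc s)"
    then show "{ps ! m, ps ! Suc m} \<in> E - {{u0, u1}}"
      using path_edge[of m] path_edge_eq_iff[of m 0] by simp
  qed simp
  ultimately have "(u0, u1) \<in> ?R"
    by (metis adj_rel_rtrancl_sym rtrancl_trans)
  moreover have "(u0, u1) \<notin> ?R"
    using no_cycle_edge_is_bridge[OF acyclic, of u0 u1] path_edge[of 0] by simp
  ultimately show False
    by contradiction
qed

lemma tree_bypassed: "tree V bypassed"
  unfolding bypassed_def
  using tree_exchange[OF tree _ path_vertex path_vertex u0_ur_separated] path_edge[of 0]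
  by simp

lemma interior_closed:
  assumes "{a, b} \<in> bypassed - {{ur1, ur}}" and "a \<in> {ps ! Suc j |j. j \<le> s}"
  shows "b \<in> {ps ! Suc j |j. j \<le> s}"
proof -
  obtain j where j: "j \<le> s" "a = ps ! Suc j"
    using assms(2) by blast
  have "{a, b} \<noteq> {u0, ur}"
    using j by (auto simp: doubleton_eq_iff)
  then have ab: "{a, b} \<in> E - {{u0, u1}, {ur1, ur}}"
    using assms(1) by (auto simp: bypassed_def)
  then have "{a, b} \<in> {e \<in> E. ps ! Suc j \<in> e}"
    using j(2) by simp
  then have "{a, b} = {ps ! j, ps ! Suc j} \<or> {a, b} = {ps ! Suc j, ps ! Suc (Suc j)}"
    unfolding interior_edges[OF j(1)] by simp
  then have "b = ps ! j \<and> j \<noteq> 0 \<or> b = ps ! Suc (Suc j) \<and> j \<noteq> s"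
    using ab j by (auto simp: doubleton_eq_iff)
  then show ?thesis
  proof
    assume "b = ps ! j \<and> j \<noteq> 0"
    then show ?thesis
      using j(1) by (auto intro!: exI[of _ "j - 1"])
  next
    assume "b = ps ! Suc (Suc j) \<and> j \<noteq> s"
    then show ?thesis
      using j(1) by (auto intro!: exI[of _ "Suc j"])
  qed
qed

lemma l_u1_separated: "(l, u1) \<notin> (adj_rel (bypassed - {{ur1, ur}}))\<^sup>*"
proof
  assume "(l, u1) \<in> (adj_rel (bypassed - {{ur1, ur}}))\<^sup>*"
  then have "(u1, l) \<in> (adj_rel (bypassed - {{ur1, ur}}))\<^sup>*"
    by (rule adj_rel_rtrancl_sym)
  then have "l \<in> {ps ! Suc j |j. j \<le> s}"
  proof (rule adj_rel_rtrancl_closed)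
    show "u1 \<in> {ps ! Suc j |j. j \<le> s}"
      by force
  qed (rule interior_closed)
  then obtain j where "j \<le> s" and "l = ps ! Suc j"
    by blast
  then show False
    using pendant_off_path[of "Suc j"] by simp
qed

lemma last_path_edge_in_bypassed: "{ur1, ur} \<in> bypassed"
  using path_edge[of "Suc s"] path_edge_eq_iff[of "Suc s" 0] by (simp add: bypassed_def)

lemma tree_transplanted: "tree V transplanted"
  unfolding transplanted_def
  using tree_exchange[OF tree_bypassed last_path_edge_in_bypassed pendant_vertex _ l_u1_separated]
    path_vertex[of 1]
  by simp

lemma deg_transplanted: "deg transplanted v = (if v = l then 2 else if v = ur1 then 1 else deg E v)"
proof -
  have "finite bypassed"
    using finite_edges by (simp add: bypassed_def)
  have "{u0, ur} \<notin> E - {{u0, u1}}" and "{l, u1} \<notin> bypassed - {{ur1, ur}}"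
    using u0_ur_separated l_u1_separated by (metis adj_rel_iff r_into_rtrancl)+
  then have deg_eq: "deg transplanted v
      = deg E v - (if v \<in> {u0, u1} then 1 else 0) + (if v \<in> {u0, ur} then 1 else 0)
        - (if v \<in> {ur1, ur} then 1 else 0) + (if v \<in> {l, u1} then 1 else 0)"
    using deg_exchange[OF finite_edges path_edge[of 0]]
      deg_exchange[OF \<open>finite bypassed\<close> last_path_edge_in_bypassed]
    by (simp add: transplanted_def bypassed_def)
  have off: "u0 \<noteq> l" "u1 \<noteq> l" "ur1 \<noteq> l" "ur \<noteq> l"
    using pendant_off_path by simp_all
  consider "v = l" | "v = ur1" | "v = u0" | "v = u1" "v \<noteq> ur1" | "v = ur"
    | "v \<notin> {l, ur1, u0, u1, ur}"
    by blast
  then show ?thesis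
    by cases (use deg_eq deg_pendant deg_ends deg_interior[of 0] deg_interior[of s] off in simp_all)
qed

lemma CT_star_transplanted:
  assumes "CT_star n b V E"
  shows "CT_star n b V transplanted"
proof -
  have "chemical_tree V transplanted"
    using assms tree_transplanted by (auto simp: CT_star_def chemical_tree_def deg_transplanted)
  moreover have "branching_vertices V transplanted = branching_vertices V E"
    using deg_pendant deg_interior[of s] by (auto simp: branching_vertices_def deg_transplanted)
  ultimately show ?thesis
    using assms by (simp add: CT_star_def)
qed

lemma new_edges_not_in_E: "{u0, ur} \<notin> E" "{l, u1} \<notin> E"
proof -
  show "{u0, ur} \<notin> E"
  proof
    assume "{u0, ur} \<in> E"
    then have "(u0, ur) \<in> adj_rel (E - {{u0, u1}})"
      by (simp add: doubleton_eq_iff)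
    then show False
      using u0_ur_separated by (simp add: r_into_rtrancl)
  qed
  show "{l, u1} \<notin> E"
  proof
    assume "{l, u1} \<in> E"
    then have "{l, u1} \<in> {e \<in> E. l \<in> e}"
      by simp
    then have "{l, u1} = {y, l}"
      unfolding pendant by simp
    then show False
      using neighbour_off_interior[of 0] by (auto simp: doubleton_eq_iff)
  qed
qed

lemma transplanted_eq: "transplanted = {{u0, ur}, {l, u1}} \<union> (E - {{u0, u1}, {ur1, ur}})"
proof -
  have "{u0, ur} \<noteq> {ur1, ur}"
    by (simp add: doubleton_eq_iff)
  moreover have "{l, u1} \<noteq> {ur1, ur}"
    using pendant_off_path[of "Suc s"] pendant_off_path[of "Suc (Suc s)"]
    by (auto simp: doubleton_eq_iff)
  ultimately show ?thesis
    by (auto simp: transplanted_def bypassed_def)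
qed

text \<open>\<open>K\<close> consists of the two deleted edges and the edges at \<open>l\<close> and \<open>ur1\<close>, the only
  vertices whose degree changes; all other edges keep their weight.\<close>

lemma M2_transplanted_exchange:
  defines "K \<equiv> {{u0, u1}, {ur1, ur}, {y, l}, {ps ! s, ur1}}"
  shows "M2 transplanted + (\<Sum>e\<in>K. \<Prod>v\<in>e. deg E v)
    = M2 E + (\<Sum>e\<in>{{u0, ur}, {l, u1}} \<union> (K - {{u0, u1}, {ur1, ur}}). \<Prod>v\<in>e. deg transplanted v)"
proof (rule M2_replace_edges[OF finite_edges])
  show "K \<subseteq> E"
    using path_edge[of 0] path_edge[of s] path_edge[of "Suc s"] pendant_edge by (simp add: K_def)
  moreover have "{{u0, u1}, {ur1, ur}} \<subseteq> K"
    by (simp add: K_def)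
  ultimately have "E - {{u0, u1}, {ur1, ur}} = (K - {{u0, u1}, {ur1, ur}}) \<union> (E - K)"
    by blast
  then show "transplanted = {{u0, ur}, {l, u1}} \<union> (K - {{u0, u1}, {ur1, ur}}) \<union> (E - K)"
    unfolding transplanted_eq by (simp add: Un_assoc)
  show "({{u0, ur}, {l, u1}} \<union> (K - {{u0, u1}, {ur1, ur}})) \<inter> (E - K) = {}"
    using new_edges_not_in_E by auto
  fix e v assume e: "e \<in> E - K" and "v \<in> e"
  have "v \<noteq> l"
  proof
    assume "v = l"
    then have "e \<in> {e \<in> E. l \<in> e}"
      using e \<open>v \<in> e\<close> by simp
    then show False
      using e unfolding pendant by (simp add: K_def)
  qed
  moreover have "v \<noteq> ur1"
  proof
    assume "v = ur1"
    then have "e \<in> {e \<in> E. ur1 \<in> e}"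
      using e \<open>v \<in> e\<close> by simp
    then show False
      using e unfolding interior_edges[of s, simplified] by (auto simp: K_def)
  qed
  ultimately show "deg transplanted v = deg E v"
    by (simp add: deg_transplanted)
qed (simp add: K_def)

lemma pendant_neighbour: "y \<noteq> l" "u1 \<noteq> y" "ur1 \<noteq> y"
  using pendant_edge simple neighbour_off_interior[of 0] neighbour_off_interior[of s]
  by (auto simp: simple_graph_def doubleton_eq_iff)

lemma deg_transplanted_unchanged:
  "deg transplanted u0 = deg E u0" "deg transplanted ur = deg E ur" "deg transplanted y = deg E y"
  using pendant_off_path[of 0] pendant_off_path[of "Suc (Suc s)"] pendant_neighbour
  by (simp_all add: deg_transplanted)

lemma M2_transplanted_eq_short:
  assumes "s = 0"
  shows "M2 transplanted + 2 * deg E u0 + 2 * deg E ur + deg E y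
    = M2 E + deg E u0 * deg E ur + 2 * deg E y + 2"
proof -
  have "ur1 = u1" and "ps ! s = u0"
    using assms by simp_all
  then have K: "{{u0, u1}, {ur1, ur}, {y, l}, {ps ! s, ur1}} = {{u0, u1}, {u1, ur}, {y, l}}"
    and K': "{{u0, ur}, {l, u1}} \<union> ({{u0, u1}, {u1, ur}, {y, l}} - {{u0, u1}, {ur1, ur}})
      = {{u0, ur}, {l, u1}, {y, l}}"
    using pendant_off_path pendant_neighbour by (auto simp: doubleton_eq_iff)
  have "deg transplanted l = 2" and "deg transplanted u1 = 1"
    unfolding deg_transplanted using \<open>ur1 = u1\<close> pendant_off_path[of 1] by simp_all
  then have "(\<Sum>e\<in>{{u0, ur}, {l, u1}, {y, l}}. \<Prod>v\<in>e. deg transplanted v)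
      = deg E u0 * deg E ur + 2 + 2 * deg E y"
    using pendant_off_path pendant_off_path[THEN not_sym] pendant_neighbour
      deg_transplanted_unchanged
    by (simp add: doubleton_eq_iff)
  moreover have "(\<Sum>e\<in>{{u0, u1}, {u1, ur}, {y, l}}. \<Prod>v\<in>e. deg E v)
      = 2 * deg E u0 + 2 * deg E ur + deg E y"
    using pendant_off_path pendant_neighbour deg_interior[of 0] deg_pendant
    by (simp add: doubleton_eq_iff)
  ultimately show ?thesis
    using M2_transplanted_exchange unfolding K K' by simp
qed

lemma M2_transplanted_eq_long:
  assumes "s \<noteq> 0"
  shows "M2 transplanted + 2 * deg E u0 + 2 * deg E ur + deg E y
    = M2 E + deg E u0 * deg E ur + 2 * deg E y + 2"
proof -
  obtain t where "s = Suc t"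
    using assms not0_implies_Suc by blast
  then have "deg E (ps ! s) = 2" and "deg E u1 = 2" and "deg E ur1 = 2"
    using deg_interior[of t] deg_interior[of 0] deg_interior[of s] by simp_all
  moreover have "deg transplanted (ps ! s) = 2" and "deg transplanted u1 = 2"
    and "deg transplanted l = 2" and "deg transplanted ur1 = 1"
    using assms pendant_off_path[of s] pendant_off_path[of 1] pendant_off_path[of "Suc s"]
      \<open>deg E (ps ! s) = 2\<close> \<open>deg E u1 = 2\<close>
    by (simp_all add: deg_transplanted)
  moreover have "{{u0, ur}, {l, u1}}
      \<union> ({{u0, u1}, {ur1, ur}, {y, l}, {ps ! s, ur1}} - {{u0, u1}, {ur1, ur}})
      = {{u0, ur}, {l, u1}, {y, l}, {ps ! s, ur1}}"
    using assms pendant_off_path by (auto simp: doubleton_eq_iff)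
  ultimately show ?thesis
    using M2_transplanted_exchange assms pendant_off_path pendant_off_path[THEN not_sym]
      pendant_neighbour deg_transplanted_unchanged deg_pendant
    by (simp add: doubleton_eq_iff algebra_simps)
qed

lemma M2_less_transplanted:
  assumes "2 \<le> deg E y"
  shows "M2 E < M2 transplanted"
  using M2_transplanted_eq_short M2_transplanted_eq_long double_sum_le_mult[OF deg_ends] assms
  by (cases "s = 0") linarith+

end

theorem lemma10:
  fixes V :: "'a set" and E :: "'a set set" and n b :: nat
  assumes "1 \<le> b" and "real b < real n / 2 - 1"
    and "CT_star n b V E"
    and "\<forall>(V' :: 'a set) E'. CT_star n b V' E' \<longrightarrow> M2 E' \<le> M2 E"
  shows "\<not> (\<exists>ps. internal_path E ps \<and> length ps - 1 > 1)"
proof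
  assume "\<exists>ps. internal_path E ps \<and> length ps - 1 > 1"
  then obtain ps where ps: "internal_path E ps" and "3 \<le> length ps"
    by auto
  have tree: "tree V E"
    using assms(3) by (simp add: CT_star_def chemical_tree_def)
  moreover have "is_path E ps"
    using ps by (simp add: internal_path_def)
  ultimately obtain l y where pendant: "{e \<in> E. l \<in> e} = {{y, l}}" and "2 \<le> deg E y"
    using long_path_imp_pendant_edge[of V E ps] \<open>3 \<le> length ps\<close> by (auto simp: tree_def)
  interpret path_transplant V E ps "length ps - 3" l y
    using tree ps \<open>3 \<le> length ps\<close> pendant by unfold_locales auto
  have "M2 transplanted \<le> M2 E"
    using assms(4) CT_star_transplanted[OF assms(3)] by blast
  then show False
    using M2_less_transplanted[OF \<open>2 \<le> deg E y\<close>] by simp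
qed

end
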